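(* Fix $n\ge 2$ and let $W\subseteq\{1,\dots,n\}^{\mathbb{Z}}$ be an infinite totally transitive subshift. Then there is a sequence of subshifts $X_m\subseteq\{1,\dots,n\}^{\mathbb{Z}}$ such that each $(X_m,\sigma)$ is a CAM $\mathbb{Z}$-system and $X_m\to W$ in the Hausdorff metric on closed subsets of $\{1,\dots,n\}^{\mathbb{Z}}$.
   Context: $\{1,\dots,n\}^{\mathbb{Z}}$ carries the metric $d(x,y)=2^{-\inf\{|k|:x_k\neq y_k\}}$ and the shift $(\sigma x)_k=x_{k+1}$; a subshift is a closed $\sigma$-invariant subset. A subshift $W$ is totally transitive if $(W,\sigma^k)$ is topologically transitive for every $k\ge1$. A $\mathbb{Z}$-system $(X,T)$ is a compact metric space with a homeomorphism $T$; it is topologically transitive if for all nonempty open $U,V$ there is $j$ with $T^jU\cap V\neq\emptyset$; the action is faithful if $T^j=\mathrm{id}$ only for $j=0$; a point is periodic if its orbit is finite. The system is chaotic almost minimal (CAM) if: (1) it is topologically transitive and the action is faithful; (2) the periodic points are dense; (3) every proper closed $T$-invariant subset is finite. *)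

theory Defs
  imports Complex_Main
begin

type_synonym config = "int \<Rightarrow> nat"

definition full_shift :: "nat \<Rightarrow> config set" where
  "full_shift n = {x. \<forall>k. x k \<in> {1..n}}"

definition sdist :: "config \<Rightarrow> config \<Rightarrow> real" where
  "sdist x y = (if x = y then 0
     else (1/2) ^ (LEAST m. \<exists>k. nat \<bar>k\<bar> = m \<and> x k \<noteq> y k))"

definition shift :: "config \<Rightarrow> config" where
  "shift x = (\<lambda>k. x (k + 1))"

definition shift_pow :: "int \<Rightarrow> config \<Rightarrow> config" where
  "shift_pow j x = (\<lambda>k. x (k + j))"

definition closed_in_shift :: "nat \<Rightarrow> config set \<Rightarrow> bool" where
  "closed_in_shift n A \<longleftrightarrow> A \<subseteq> full_shift n \<and>
     (\<forall>x \<in> full_shift n. (\<forall>e>0. \<exists>y\<in>A. sdist x y < e) \<longrightarrow> x \<in> A)"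

definition subshift :: "nat \<Rightarrow> config set \<Rightarrow> bool" where
  "subshift n X \<longleftrightarrow> closed_in_shift n X \<and> shift ` X = X"

definition open_in_X :: "config set \<Rightarrow> config set \<Rightarrow> bool" where
  "open_in_X X U \<longleftrightarrow> U \<subseteq> X \<and>
     (\<forall>x\<in>U. \<exists>e>0. \<forall>y\<in>X. sdist x y < e \<longrightarrow> y \<in> U)"

definition transitive_pow :: "config set \<Rightarrow> int \<Rightarrow> bool" where
  "transitive_pow X p \<longleftrightarrow>
     (\<forall>U V. open_in_X X U \<and> open_in_X X V \<and> U \<noteq> {} \<and> V \<noteq> {} \<longrightarrow>
        (\<exists>j::int. shift_pow (p * j) ` U \<inter> V \<noteq> {}))"

definition totally_transitive :: "config set \<Rightarrow> bool" where
  "totally_transitive X \<longleftrightarrow> (\<forall>k::nat. k \<ge> 1 \<longrightarrow> transitive_pow X (int k))"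

definition faithful :: "config set \<Rightarrow> bool" where
  "faithful X \<longleftrightarrow> (\<forall>j::int. (\<forall>x\<in>X. shift_pow j x = x) \<longrightarrow> j = 0)"

definition periodic_point :: "config set \<Rightarrow> config \<Rightarrow> bool" where
  "periodic_point X x \<longleftrightarrow> x \<in> X \<and> finite (range (\<lambda>j. shift_pow j x))"

definition CAM :: "config set \<Rightarrow> bool" where
  "CAM X \<longleftrightarrow>
     transitive_pow X 1 \<and> faithful X \<and>
     (\<forall>x\<in>X. \<forall>e>0. \<exists>p. periodic_point X p \<and> sdist x p < e) \<and>
     (\<forall>Y. Y \<subseteq> X \<and> Y \<noteq> X \<and>
          (\<forall>x\<in>X. (\<forall>e>0. \<exists>y\<in>Y. sdist x y < e) \<longrightarrow> x \<in> Y) \<and>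
          shift ` Y = Y \<longrightarrow> finite Y)"

definition hausdorff :: "config set \<Rightarrow> config set \<Rightarrow> real" where
  "hausdorff A B = max (SUP a\<in>A. INF b\<in>B. sdist a b) (SUP b\<in>B. INF a\<in>A. sdist a b)"

end

theory Submission
  imports Defs "HOL-Library.Sublist" "HOL-Library.Infinite_Set"
begin

text \<open>
  Given words \<open>a\<close>, \<open>b\<close> that differ at some position, define blocks \<open>B\<^sub>0 = a\<close>, \<open>B\<^sub>1 = a b\<close> and
  \<open>B\<^sub>k\<^sub>+\<^sub>2 = B\<^sub>k\<^sub>+\<^sub>1 B\<^sub>0\<^sup>k\<^sup>+\<^sup>2 B\<^sub>k\<^sub>+\<^sub>1 B\<^sub>1\<^sup>k\<^sup>+\<^sup>2 B\<^sub>k\<^sub>+\<^sub>1 \<dots> B\<^sub>k\<^sub>+\<^sub>1\<^sup>k\<^sup>+\<^sup>2 B\<^sub>k\<^sub>+\<^sub>1\<close>,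
  and let \<open>X\<close> consist of the points all of whose windows occur in some block. Each block contains
  all earlier ones, which makes \<open>X\<close> transitive and the periodic points \<open>B\<^sub>K\<^sup>\<infinity>\<close> dense, and \<open>X\<close> is
  infinite because it contains the words \<open>a\<^sup>c b\<close>. Between two consecutive occurrences of \<open>B\<^sub>K\<close> in a
  later block there is only a power of a lower block, so a point of \<open>X\<close> that avoids \<open>B\<^sub>K\<close> is one
  of finitely many periodic points. Hence an infinite closed invariant subset sees every block and
  is all of \<open>X\<close>: the system is CAM.

  To approximate \<open>W\<close> up to \<open>2\<^sup>-\<^sup>m\<close>, the words are taken from \<open>W\<close>. Being infinite, \<open>W\<close> has a word \<open>S\<close>
  with two different one-letter extensions to the right. Total transitivity yields a word \<open>a\<close>
  containing every word of length \<open>2m+1\<close> of \<open>W\<close> and returning to its own beginning \<open>J\<close> of length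
  \<open>2m\<close>, i.e. \<open>a J\<close> is a word of \<open>W\<close>; \<open>b\<close> is \<open>a\<close> with the continuation after one occurrence of \<open>S\<close>
  switched. Concatenations of such words overlap in \<open>J\<close>, so all their factors of length \<open>2m+1\<close>
  occur in \<open>W\<close>, and \<open>X\<close> and \<open>W\<close> have the same words of length \<open>2m+1\<close>.
\<close>

section \<open>Words\<close>

lemma sublist_iff_nth:
  "sublist xs ys \<longleftrightarrow> (\<exists>p. p + length xs \<le> length ys \<and> (\<forall>t<length xs. xs ! t = ys ! (p + t)))"
proof
  assume "sublist xs ys"
  then obtain ps ss where "ys = ps @ xs @ ss" by (auto simp: sublist_def)
  then show "\<exists>p. p + length xs \<le> length ys \<and> (\<forall>t<length xs. xs ! t = ys ! (p + t))"
    by (intro exI[of _ "length ps"]) (auto simp: nth_append)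
next
  assume "\<exists>p. p + length xs \<le> length ys \<and> (\<forall>t<length xs. xs ! t = ys ! (p + t))"
  then obtain p where p: "p + length xs \<le> length ys" "\<forall>t<length xs. xs ! t = ys ! (p + t)"
    by blast
  then have "xs = take (length xs) (drop p ys)"
    by (intro nth_equalityI) auto
  then have "ys = take p ys @ xs @ drop (length xs) (drop p ys)"
    by (metis append_take_drop_id)
  then show "sublist xs ys" unfolding sublist_def by blast
qed

declare sublist_order.order_trans [trans]

lemma sublist_of_left_part:
  assumes "p + length w \<le> length U" "\<forall>t<length w. w ! t = (U @ V) ! (p + t)"
  shows "sublist w U"
  unfolding sublist_iff_nth using assms by (intro exI[of _ p]) (auto simp: nth_append)

lemma sublist_of_right_part:
  assumes "length U \<le> p" "p + length w \<le> length (U @ V)" "\<forall>t<length w. w ! t = (U @ V) ! (p + t)"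
  shows "sublist w V"
  unfolding sublist_iff_nth using assms by (intro exI[of _ "p - length U"]) (auto simp: nth_append)

lemma sublist_avoiding_middle:
  assumes "sublist w (X @ G @ Y)" "\<not> sublist G w"
  shows "sublist w (X @ butlast G) \<or> sublist w (tl G @ Y)"
proof -
  obtain p where p: "p + length w \<le> length (X @ G @ Y)"
    "\<forall>t<length w. w ! t = (X @ G @ Y) ! (p + t)"
    using assms(1) unfolding sublist_iff_nth by blast
  have "G \<noteq> []" using assms(2) by auto
  then have split_last: "X @ G @ Y = (X @ butlast G) @ [last G] @ Y"
    and split_hd: "X @ G @ Y = (X @ [hd G]) @ tl G @ Y" by simp_all
  consider "p + length w < length X + length G" | "length X < p"
    | "p \<le> length X" "length X + length G \<le> p + length w" by linarith
  then show ?thesis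
  proof cases
    case 1
    then have "sublist w (X @ butlast G)"
      using p unfolding split_last by (intro sublist_of_left_part) auto
    then show ?thesis ..
  next
    case 2
    then have "sublist w (tl G @ Y)"
      using p unfolding split_hd by (intro sublist_of_right_part[where U = "X @ [hd G]"]) auto
    then show ?thesis ..
  next
    case 3
    have "sublist G w"
      unfolding sublist_iff_nth
    proof (intro exI[of _ "length X - p"] conjI allI impI)
      fix t assume "t < length G"
      then show "G ! t = w ! (length X - p + t)" using 3 p(2) by (auto simp: nth_append)
    qed (use 3 in auto)
    with assms(2) show ?thesis by contradiction
  qed
qed

lemma sublist_middle:
  assumes "sublist (u @ v @ u') (G @ Z @ G')" "length u = length G" "length u' = length G'"
  shows "sublist v Z"
proof -
  obtain p where p: "p + length (u @ v @ u') \<le> length (G @ Z @ G')"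
    "\<forall>t<length (u @ v @ u'). (u @ v @ u') ! t = (G @ Z @ G') ! (p + t)"
    using assms(1) unfolding sublist_iff_nth by blast
  show ?thesis
    unfolding sublist_iff_nth
  proof (intro exI[of _ p] conjI allI impI)
    show "p + length v \<le> length Z" using p(1) assms(2,3) by simp
    fix t assume "t < length v"
    then have "length u + t < length (u @ v @ u')" by simp
    then have "(u @ v @ u') ! (length u + t) = (G @ Z @ G') ! (p + (length u + t))"
      using p(2) by blast
    then show "v ! t = Z ! (p + t)"
      using \<open>t < length v\<close> p(1) assms(2,3) by (simp add: nth_append)
  qed
qed

lemma sublist_concat_map:
  assumes "x \<in> set xs"
  shows "sublist (f x) (concat (map f xs))"
proof -
  obtain ys zs where "xs = ys @ x # zs" using assms split_list by metis
  then have "concat (map f xs) = concat (map f ys) @ f x @ concat (map f zs)" by simp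
  then show ?thesis by (simp only:) (rule sublist_appendI)
qed

definition repeat :: "nat \<Rightarrow> 'a list \<Rightarrow> 'a list" where
  "repeat c xs = concat (replicate c xs)"

lemma repeat_0 [simp]: "repeat 0 xs = []"
  by (simp add: repeat_def)

lemma repeat_Suc: "repeat (Suc c) xs = xs @ repeat c xs"
  by (simp add: repeat_def)

lemma repeat_add: "repeat (c + d) xs = repeat c xs @ repeat d xs"
  by (simp add: repeat_def replicate_add)

lemma repeat_Suc2: "repeat (Suc c) xs = repeat c xs @ xs"
  using repeat_add[of c 1 xs] by (simp add: repeat_def)

lemma length_repeat [simp]: "length (repeat c xs) = c * length xs"
  by (induction c) (auto simp: repeat_Suc)

lemma set_repeat: "set (repeat c xs) \<subseteq> set xs"
  by (auto simp: repeat_def)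

lemma nth_repeat: "k < c * length xs \<Longrightarrow> repeat c xs ! k = xs ! (k mod length xs)"
proof (induction c arbitrary: k)
  case (Suc c)
  then show ?case
    by (cases "k < length xs") (auto simp: repeat_Suc nth_append mod_if)
qed simp

lemma sublist_repeat_mono: "c \<le> d \<Longrightarrow> sublist (repeat c xs) (repeat d xs)"
  by (metis le_iff_add repeat_add sublist_append_rightI)

section \<open>Windows and the shift\<close>

definition window :: "config \<Rightarrow> int \<Rightarrow> nat \<Rightarrow> nat list" where
  "window x i l = map (\<lambda>t. x (i + int t)) [0..<l]"

abbreviation central_window :: "config \<Rightarrow> nat \<Rightarrow> nat list" where
  "central_window x r \<equiv> window x (- int r) (2 * r + 1)"

lemma length_window [simp]: "length (window x i l) = l"
  by (simp add: window_def)

lemma nth_window [simp]: "t < l \<Longrightarrow> window x i l ! t = x (i + int t)"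
  by (simp add: window_def)

lemma window_eq_iff: "window x i l = window y j l \<longleftrightarrow> (\<forall>t<l. x (i + int t) = y (j + int t))"
  by (auto simp: list_eq_iff_nth_eq)

lemma window_append: "window x i (l1 + l2) = window x i l1 @ window x (i + int l1) l2"
  by (rule nth_equalityI) (auto simp: nth_append add_ac)

lemma window_append3:
  "window x i (l1 + l2 + l3) = window x i l1 @ window x (i + int l1) l2 @ window x (i + int l1 + int l2) l3"
  by (rule nth_equalityI) (auto simp: nth_append add_ac)

lemma drop_window: "drop j (window x i l) = window x (i + int j) (l - j)"
  by (rule nth_equalityI) (auto simp: add_ac)

lemma take_window: "l \<le> L \<Longrightarrow> take l (window x i L) = window x i l"
  by (rule nth_equalityI) auto

lemma set_window: "x \<in> full_shift n \<Longrightarrow> set (window x i l) \<subseteq> {1..n}"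
  unfolding full_shift_def window_def by auto

lemma sublist_window:
  assumes "i \<le> j" "j + int l \<le> i + int L"
  shows "sublist (window x j l) (window x i L)"
proof -
  define k where "k = nat (j - i)"
  have j: "i + int k = j" and L: "L = k + (l + (L - k - l))"
    using assms by (auto simp: k_def)
  have "window x i L = window x i k @ window x j l @ window x (j + int l) (L - k - l)"
    by (subst L) (simp add: window_append j)
  then show ?thesis by (simp only:) (rule sublist_appendI)
qed

lemma sublist_windowE:
  assumes "sublist w (window x i l)"
  obtains j where "w = window x j (length w)"
proof -
  from assms obtain p where "p + length w \<le> l" "\<forall>t<length w. w ! t = window x i l ! (p + t)"
    unfolding sublist_iff_nth by auto
  then have "w = window x (i + int p) (length w)"
    by (intro nth_equalityI) (auto simp: add_ac)
  then show thesis by (rule that)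
qed

lemma shift_pow_apply: "shift_pow j x k = x (k + j)"
  by (simp add: shift_pow_def)

lemma shift_pow_add: "shift_pow i (shift_pow j x) = shift_pow (i + j) x"
  by (auto simp: shift_pow_def add_ac)

lemma shift_pow_0 [simp]: "shift_pow 0 x = x"
  by (auto simp: shift_pow_def)

lemma shift_eq_shift_pow: "shift = shift_pow 1"
  by (auto simp: shift_def shift_pow_def fun_eq_iff)

lemma window_shift_pow: "window (shift_pow j x) i l = window x (i + j) l"
  by (simp add: window_def shift_pow_apply add_ac)

lemma shift_pow_in_invariant:
  assumes "shift ` Y = Y" "y \<in> Y"
  shows "shift_pow j y \<in> Y"
proof (induction j rule: int_induct[where k = 0])
  case base
  then show ?case using assms(2) by simp
next
  case (step1 i)
  then have "shift (shift_pow i y) \<in> Y" using assms(1) by blast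
  then show ?case by (simp add: shift_eq_shift_pow shift_pow_add add.commute)
next
  case (step2 i)
  then obtain z where z: "z \<in> Y" "shift_pow i y = shift z" using assms(1) by blast
  have "shift_pow (i - 1) y = shift_pow (-1) (shift_pow i y)" by (simp add: shift_pow_add)
  also have "\<dots> = z" using z(2) by (simp add: shift_eq_shift_pow shift_pow_add)
  finally show ?case using z(1) by simp
qed

lemma shift_image_eqI:
  assumes "\<And>y j. y \<in> Y \<Longrightarrow> shift_pow j y \<in> Y"
  shows "shift ` Y = Y"
proof
  show "shift ` Y \<subseteq> Y" using assms by (auto simp: shift_eq_shift_pow)
  show "Y \<subseteq> shift ` Y"
  proof
    fix y assume "y \<in> Y"
    then have "shift (shift_pow (-1) y) = y" "shift_pow (-1) y \<in> Y"
      using assms by (simp_all add: shift_eq_shift_pow shift_pow_add)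
    then show "y \<in> shift ` Y" by (metis image_eqI)
  qed
qed

section \<open>The metric and central windows\<close>

lemma sdist_less_if_agree:
  assumes "\<And>k. \<bar>k\<bar> \<le> int r \<Longrightarrow> x k = y k"
  shows "sdist x y < (1/2) ^ r"
proof (cases "x = y")
  case False
  let ?P = "\<lambda>m. \<exists>k. nat \<bar>k\<bar> = m \<and> x k \<noteq> y k"
  from False obtain k where k: "x k \<noteq> y k" by auto
  have "?P (LEAST m. ?P m)" by (rule LeastI[of _ "nat \<bar>k\<bar>"]) (use k in auto)
  then obtain k' where k': "nat \<bar>k'\<bar> = (LEAST m. ?P m)" "x k' \<noteq> y k'" by blast
  with assms have "\<bar>k'\<bar> > int r" by force
  then have "r < (LEAST m. ?P m)" using k'(1) by linarith
  then have "(1/2::real) ^ (LEAST m. ?P m) < (1/2) ^ r" by (rule power_strict_decreasing) simp_all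
  then show ?thesis using False by (simp add: sdist_def)
qed (simp add: sdist_def)

lemma eq_if_sdist_less:
  assumes "sdist x y < (1/2) ^ r" "\<bar>k\<bar> \<le> int r"
  shows "x k = y k"
proof (rule ccontr)
  let ?P = "\<lambda>m. \<exists>k. nat \<bar>k\<bar> = m \<and> x k \<noteq> y k"
  assume ne: "x k \<noteq> y k"
  have "(LEAST m. ?P m) \<le> nat \<bar>k\<bar>" by (rule Least_le) (use ne in auto)
  then have "(LEAST m. ?P m) \<le> r" using assms(2) by linarith
  then have "(1/2::real) ^ r \<le> (1/2) ^ (LEAST m. ?P m)"
    by (rule power_decreasing) simp_all
  also have "\<dots> = sdist x y" using ne by (auto simp: sdist_def)
  finally show False using assms(1) by simp
qed

lemma sdist_less_if_central_window_eq:
  assumes "central_window x r = central_window y r"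
  shows "sdist x y < (1/2) ^ r"
proof (rule sdist_less_if_agree)
  fix k :: int assume k: "\<bar>k\<bar> \<le> int r"
  then have "nat (k + int r) < 2 * r + 1" by linarith
  then have "x (- int r + int (nat (k + int r))) = y (- int r + int (nat (k + int r)))"
    using assms unfolding window_eq_iff by blast
  moreover have "- int r + int (nat (k + int r)) = k" using k by linarith
  ultimately show "x k = y k" by simp
qed

lemma window_eq_if_sdist_less:
  assumes "sdist x y < (1/2) ^ (nat \<bar>i\<bar> + l)"
  shows "window x i l = window y i l"
  unfolding window_eq_iff
proof (intro allI impI)
  fix t assume "t < l"
  then have "\<bar>i + int t\<bar> \<le> int (nat \<bar>i\<bar> + l)" by linarith
  then show "x (i + int t) = y (i + int t)" by (rule eq_if_sdist_less[OF assms])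
qed

lemma sdist_nonneg: "0 \<le> sdist x y"
  by (simp add: sdist_def)

lemma sdist_le_1: "sdist x y \<le> 1"
  by (simp add: sdist_def power_le_one)

lemma adherent_if_central_windows:
  assumes "\<And>r. \<exists>y\<in>Y. central_window y r = central_window x r"
  shows "\<forall>e>0. \<exists>y\<in>Y. sdist x y < e"
proof (intro allI impI)
  fix e :: real assume "e > 0"
  then obtain r where r: "(1/2) ^ r < e" using real_arch_pow_inv by force
  obtain y where y: "y \<in> Y" "central_window y r = central_window x r" using assms by blast
  then have "sdist x y < (1/2) ^ r" by (intro sdist_less_if_central_window_eq) simp
  then show "\<exists>y\<in>Y. sdist x y < e" using y(1) r by (meson less_trans)
qed

lemma open_in_X_central_window:
  assumes "open_in_X X U" "x \<in> U"
  obtains r where "\<And>y. y \<in> X \<Longrightarrow> central_window y r = central_window x r \<Longrightarrow> y \<in> U"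
proof -
  from assms obtain e where e: "e > 0" "\<forall>y\<in>X. sdist x y < e \<longrightarrow> y \<in> U"
    unfolding open_in_X_def by blast
  obtain r where r: "(1/2) ^ r < e" using real_arch_pow_inv e(1) by force
  show thesis
  proof (rule that)
    fix y assume "y \<in> X" "central_window y r = central_window x r"
    then have "sdist x y < (1/2) ^ r" by (intro sdist_less_if_central_window_eq) simp
    then show "y \<in> U" using e(2) r \<open>y \<in> X\<close> by auto
  qed
qed

lemma mem_if_central_windows_in_finite:
  assumes "finite P" "\<And>r. \<exists>p\<in>P. central_window p r = central_window y r"
  shows "y \<in> P"
proof (rule ccontr)
  assume "y \<notin> P"
  have "\<exists>k. p k \<noteq> y k" if "p \<in> P" for p
  proof -
    have "p \<noteq> y" using that \<open>y \<notin> P\<close> by blast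
    then show ?thesis by (auto simp: fun_eq_iff)
  qed
  then have "\<forall>p\<in>P. \<exists>k. p k \<noteq> y k" by blast
  from bchoice[OF this] obtain k where k: "\<forall>p\<in>P. p (k p) \<noteq> y (k p)" by blast
  let ?r = "Max ((\<lambda>p. nat \<bar>k p\<bar>) ` P)"
  obtain p where p: "p \<in> P" "central_window p ?r = central_window y ?r" using assms(2) by blast
  have "nat \<bar>k p\<bar> \<le> ?r" using assms(1) p(1) by simp
  then have "\<bar>k p\<bar> \<le> int ?r" by linarith
  moreover have "sdist p y < (1/2) ^ ?r" using p(2) by (rule sdist_less_if_central_window_eq)
  ultimately have "p (k p) = y (k p)" by (intro eq_if_sdist_less)
  with k p(1) show False by blast
qed

lemma hausdorff_le:
  assumes "X \<noteq> {}" "Y \<noteq> {}"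
    and "\<And>x. x \<in> X \<Longrightarrow> \<exists>y\<in>Y. sdist x y \<le> B" "\<And>y. y \<in> Y \<Longrightarrow> \<exists>x\<in>X. sdist x y \<le> B"
  shows "hausdorff X Y \<le> B"
proof -
  have "(INF y\<in>Y. sdist x y) \<le> B" if x: "x \<in> X" for x
  proof -
    obtain y where "y \<in> Y" "sdist x y \<le> B" using assms(3)[OF x] by blast
    moreover have "bdd_below ((\<lambda>y. sdist x y) ` Y)" by (rule bdd_belowI[of _ 0]) (auto simp: sdist_nonneg)
    ultimately show ?thesis by (intro cINF_lower2)
  qed
  then have left: "(SUP x\<in>X. INF y\<in>Y. sdist x y) \<le> B" by (rule cSUP_least[OF assms(1)])
  have "(INF x\<in>X. sdist x y) \<le> B" if y: "y \<in> Y" for y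
  proof -
    obtain x where "x \<in> X" "sdist x y \<le> B" using assms(4)[OF y] by blast
    moreover have "bdd_below ((\<lambda>x. sdist x y) ` X)" by (rule bdd_belowI[of _ 0]) (auto simp: sdist_nonneg)
    ultimately show ?thesis by (intro cINF_lower2)
  qed
  then have right: "(SUP y\<in>Y. INF x\<in>X. sdist x y) \<le> B" by (rule cSUP_least[OF assms(2)])
  show ?thesis using left right by (simp add: hausdorff_def)
qed

lemma hausdorff_nonneg:
  assumes "X \<noteq> {}" "Y \<noteq> {}"
  shows "0 \<le> hausdorff X Y"
proof -
  obtain x0 y0 where x0: "x0 \<in> X" and y0: "y0 \<in> Y" using assms by blast
  have "bdd_above ((\<lambda>x. INF y\<in>Y. sdist x y) ` X)"
  proof (rule bdd_aboveI[of _ 1])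
    fix t assume "t \<in> (\<lambda>x. INF y\<in>Y. sdist x y) ` X"
    then obtain x where t: "t = (INF y\<in>Y. sdist x y)" by blast
    have "bdd_below ((\<lambda>y. sdist x y) ` Y)" by (rule bdd_belowI[of _ 0]) (auto simp: sdist_nonneg)
    then show "t \<le> 1" unfolding t using y0 sdist_le_1 by (intro cINF_lower2) auto
  qed
  have "0 \<le> (INF y\<in>Y. sdist x0 y)" using assms(2) sdist_nonneg by (intro cINF_greatest) auto
  also have "\<dots> \<le> (SUP x\<in>X. INF y\<in>Y. sdist x y)" by (rule cSUP_upper[OF x0]) fact
  finally show ?thesis by (simp add: hausdorff_def)
qed

lemma hausdorff_tendsto_zero:
  assumes "\<And>m. X m \<noteq> {}" "Y \<noteq> {}" "\<And>m. hausdorff (X m) Y \<le> (1/2) ^ m"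
  shows "(\<lambda>m. hausdorff (X m) Y) \<longlonglongrightarrow> 0"
proof (rule real_tendsto_sandwich[where f = "\<lambda>_. 0" and h = "\<lambda>m. (1/2) ^ m"])
  show "\<forall>\<^sub>F m in sequentially. 0 \<le> hausdorff (X m) Y"
    using assms(1,2) by (intro always_eventually allI hausdorff_nonneg)
  show "\<forall>\<^sub>F m in sequentially. hausdorff (X m) Y \<le> (1/2) ^ m" using assms(3) by simp
  show "(\<lambda>m. (1/2::real) ^ m) \<longlonglongrightarrow> 0" by (rule LIMSEQ_power_zero) simp
qed simp

section \<open>Periodic configurations\<close>

definition periodic_config :: "nat list \<Rightarrow> config" where
  "periodic_config P t = P ! nat (t mod int (length P))"

lemma shift_pow_periodic_config_mod:
  "P \<noteq> [] \<Longrightarrow> shift_pow t (periodic_config P) = shift_pow (t mod int (length P)) (periodic_config P)"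
  unfolding periodic_config_def shift_pow_def by (metis mod_add_right_eq)

lemma window_periodic_config:
  assumes "P \<noteq> []"
  shows "window (periodic_config P) 0 (c * length P) = repeat c P"
proof (rule nth_equalityI)
  fix t assume "t < length (window (periodic_config P) 0 (c * length P))"
  then show "window (periodic_config P) 0 (c * length P) ! t = repeat c P ! t"
    by (simp add: nth_repeat periodic_config_def nat_mod_as_int)
qed simp

lemma sublist_repeatE:
  assumes "P \<noteq> []" "sublist w (repeat c P)"
  obtains s where "w = window (periodic_config P) s (length w)"
  using assms window_periodic_config sublist_windowE by metis

lemma sublist_window_periodic_config:
  assumes "P \<noteq> []"
  shows "sublist (window (periodic_config P) s l) (repeat (l div length P + 2) P)"
proof -
  let ?L = "length P"
  have "l div ?L * ?L + l mod ?L = l" by (rule div_mult_mod_eq)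
  moreover have "l mod ?L < ?L" using assms by simp
  ultimately have bound: "l + ?L \<le> (l div ?L + 2) * ?L" unfolding distrib_right by linarith
  have "window (periodic_config P) s l = window (shift_pow s (periodic_config P)) 0 l"
    by (simp add: window_shift_pow)
  also have "\<dots> = window (shift_pow (s mod int ?L) (periodic_config P)) 0 l"
    by (subst shift_pow_periodic_config_mod[OF assms]) (rule refl)
  also have "\<dots> = window (periodic_config P) (s mod int ?L) l"
    by (simp add: window_shift_pow)
  also have "sublist \<dots> (window (periodic_config P) 0 ((l div ?L + 2) * ?L))"
  proof (rule sublist_window)
    have "s mod int ?L < int ?L" using assms by simp
    then show "s mod int ?L + int l \<le> 0 + int ((l div ?L + 2) * ?L)" using bound by linarith
  qed (use assms in simp)
  also have "\<dots> = repeat (l div ?L + 2) P" by (rule window_periodic_config[OF assms])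
  finally show ?thesis .
qed

lemma finite_orbit_periodic_config:
  assumes "P \<noteq> []"
  shows "finite (range (\<lambda>j. shift_pow j (shift_pow s (periodic_config P))))"
proof -
  have "range (\<lambda>j. shift_pow j (shift_pow s (periodic_config P)))
      \<subseteq> (\<lambda>t. shift_pow t (periodic_config P)) ` {0..<int (length P)}"
  proof
    fix y assume "y \<in> range (\<lambda>j. shift_pow j (shift_pow s (periodic_config P)))"
    then obtain j where "y = shift_pow (j + s) (periodic_config P)" by (auto simp: shift_pow_add)
    then have "y = shift_pow ((j + s) mod int (length P)) (periodic_config P)"
      using shift_pow_periodic_config_mod[OF assms] by simp
    moreover have "(j + s) mod int (length P) \<in> {0..<int (length P)}" using assms by simp
    ultimately show "y \<in> (\<lambda>t. shift_pow t (periodic_config P)) ` {0..<int (length P)}" by blast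
  qed
  then show ?thesis by (rule finite_subset) simp
qed

lemma periodic_config_in_full_shift:
  assumes "P \<noteq> []" "set P \<subseteq> {1..n}"
  shows "periodic_config P \<in> full_shift n"
proof -
  have "P ! nat (k mod int (length P)) \<in> set P" for k
    using assms(1) by (intro nth_mem) (simp add: nat_less_iff)
  then show ?thesis using assms(2) unfolding full_shift_def periodic_config_def by blast
qed

lemma shift_pow_fixed_mult:
  assumes "shift_pow j x = x"
  shows "x (k + j * m) = x k"
proof -
  have step: "x (k + j) = x k" for k using assms by (metis shift_pow_apply)
  have "\<forall>k. x (k + j * m) = x k"
  proof (induction m rule: int_induct[where k = 0])
    case (step1 m)
    show ?case
    proof
      fix k
      have "x (k + j * (m + 1)) = x ((k + j) + j * m)" by (simp add: algebra_simps)
      also have "\<dots> = x k" using step1(2) step by simp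
      finally show "x (k + j * (m + 1)) = x k" .
    qed
  next
    case (step2 m)
    show ?case
    proof
      fix k
      have "x (k + j * (m - 1)) = x ((k - j) + j * m)" by (simp add: algebra_simps)
      also have "\<dots> = x (k - j)" using step2(2) by blast
      also have "\<dots> = x ((k - j) + j)" by (rule step[symmetric])
      finally show "x (k + j * (m - 1)) = x k" by simp
    qed
  qed simp
  then show ?thesis by blast
qed

lemma shift_pow_fixed_abs:
  assumes "shift_pow j x = x"
  shows "shift_pow \<bar>j\<bar> x = x"
proof (cases "j \<ge> 0")
  case False
  then have "shift_pow \<bar>j\<bar> x = shift_pow (- j) (shift_pow j x)" using assms by simp
  also have "\<dots> = x" by (simp add: shift_pow_add)
  finally show ?thesis .
qed (use assms in simp)

lemma finite_fixed_configs:
  assumes "j \<noteq> 0"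
  shows "finite {x \<in> full_shift n. shift_pow j x = x}"
proof -
  let ?S = "{x \<in> full_shift n. shift_pow j x = x}"
  have mod: "x k = x (k mod \<bar>j\<bar>)" if "x \<in> ?S" for x k
  proof -
    have "shift_pow \<bar>j\<bar> x = x" using that by (simp add: shift_pow_fixed_abs)
    then have "x (k mod \<bar>j\<bar> + \<bar>j\<bar> * (k div \<bar>j\<bar>)) = x (k mod \<bar>j\<bar>)"
      by (rule shift_pow_fixed_mult)
    then show ?thesis by simp
  qed
  have "inj_on (\<lambda>x. window x 0 (nat \<bar>j\<bar>)) ?S"
  proof (rule inj_onI)
    fix x y assume xy: "x \<in> ?S" "y \<in> ?S" and eq: "window x 0 (nat \<bar>j\<bar>) = window y 0 (nat \<bar>j\<bar>)"
    show "x = y"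
    proof
      fix k
      have "nat (k mod \<bar>j\<bar>) < nat \<bar>j\<bar>" using assms by simp
      then have "x (0 + int (nat (k mod \<bar>j\<bar>))) = y (0 + int (nat (k mod \<bar>j\<bar>)))"
        using eq unfolding window_eq_iff by blast
      then have "x (k mod \<bar>j\<bar>) = y (k mod \<bar>j\<bar>)" using assms by simp
      then show "x k = y k" using mod[OF xy(1), of k] mod[OF xy(2), of k] by simp
    qed
  qed
  moreover have "(\<lambda>x. window x 0 (nat \<bar>j\<bar>)) ` ?S \<subseteq> {xs. set xs \<subseteq> {1..n} \<and> length xs = nat \<bar>j\<bar>}"
  proof (rule image_subsetI)
    fix x assume "x \<in> ?S"
    then show "window x 0 (nat \<bar>j\<bar>) \<in> {xs. set xs \<subseteq> {1..n} \<and> length xs = nat \<bar>j\<bar>}"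
      using set_window[of x n 0 "nat \<bar>j\<bar>"] by simp
  qed
  ultimately show ?thesis
    using finite_lists_length_eq[of "{1..n}" "nat \<bar>j\<bar>"] inj_on_finite by blast
qed

lemma faithful_if_infinite:
  assumes "infinite X" "X \<subseteq> full_shift n"
  shows "faithful X"
  unfolding faithful_def
proof (intro allI impI)
  fix j assume fixed: "\<forall>x\<in>X. shift_pow j x = x"
  show "j = 0"
  proof (rule ccontr)
    assume "j \<noteq> 0"
    then have "finite {x \<in> full_shift n. shift_pow j x = x}" by (rule finite_fixed_configs)
    moreover have "X \<subseteq> {x \<in> full_shift n. shift_pow j x = x}" using fixed assms(2) by blast
    ultimately show False using assms(1) finite_subset by blast
  qed
qed

section \<open>Hierarchical blocks\<close>

fun block :: "nat list \<Rightarrow> nat list \<Rightarrow> nat \<Rightarrow> nat list" where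
  "block a b 0 = a"
| "block a b (Suc 0) = a @ b"
| "block a b (Suc (Suc k)) = block a b (Suc k) @
     concat (map (\<lambda>i. repeat (k + 2) (block a b i) @ block a b (Suc k)) [0..<k + 2])"

lemma prefix_block: "i \<le> j \<Longrightarrow> prefix (block a b i) (block a b j)"
proof (induction j)
  case (Suc j)
  have "prefix (block a b j) (block a b (Suc j))" by (cases j) auto
  with Suc show ?case by (cases "i = Suc j") (auto intro: prefix_order.order_trans)
qed simp

lemma sublist_block: "i \<le> j \<Longrightarrow> sublist (block a b i) (block a b j)"
  by (simp add: prefix_block)

lemma block_ne_Nil: "a \<noteq> [] \<Longrightarrow> block a b j \<noteq> []"
  using prefix_block[of 0 j a b] by auto

lemma set_block: "set (block a b j) \<subseteq> set a \<union> set b"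
proof (induction a b j rule: block.induct)
  case (3 a b k)
  have parts: "set (repeat (k + 2) (block a b i) @ block a b (Suc k)) \<subseteq> set a \<union> set b"
    if "i \<in> set [0..<k + 2]" for i
    using 3(1) 3(2)[OF that] set_repeat by fastforce
  show ?case
    by (simp only: block.simps set_append set_concat set_map) (use 3(1) parts in blast)
qed auto

lemma sublist_repeat_block_Suc:
  assumes "i \<le> Suc k" "c \<le> k + 2"
  shows "sublist (repeat c (block a b i)) (block a b (Suc (Suc k)))"
proof -
  let ?f = "\<lambda>i. repeat (k + 2) (block a b i) @ block a b (Suc k)"
  have "sublist (repeat c (block a b i)) (repeat (k + 2) (block a b i))"
    using assms(2) by (rule sublist_repeat_mono)
  also have "sublist \<dots> (?f i)" by (rule sublist_append_rightI)
  also have "sublist (?f i) (concat (map ?f [0..<k + 2]))"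
    using assms(1) by (intro sublist_concat_map) auto
  also have "sublist \<dots> (block a b (Suc (Suc k)))" by simp
  finally show ?thesis .
qed

lemma sublist_repeat_block: "\<exists>K. sublist (repeat c (block a b i)) (block a b K)"
  by (intro exI[of _ "Suc (Suc (c + i))"] sublist_repeat_block_Suc) auto

lemma sublist_repeat_append_block: "sublist (repeat c a @ b) (block a b (c + 2))"
proof -
  let ?f = "\<lambda>i. repeat (c + 2) (block a b i) @ block a b (Suc c)"
  obtain r where r: "block a b (Suc c) = a @ b @ r"
    using prefix_block[of 1 "Suc c" a b] by (auto simp: prefix_def)
  have "repeat (c + 2) a @ a = repeat (Suc (c + 2)) a" by (rule repeat_Suc2[symmetric])
  also have "\<dots> = repeat (3 + c) a" by (simp add: numeral_3_eq_3)
  also have "\<dots> = repeat 3 a @ repeat c a" by (rule repeat_add)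
  finally have "repeat (c + 2) a @ a = repeat 3 a @ repeat c a" .
  then have "?f 0 = repeat 3 a @ (repeat c a @ b) @ r" by (simp add: r)
  then have "sublist (repeat c a @ b) (?f 0)" by (simp only:) (rule sublist_appendI)
  also have "sublist (?f 0) (concat (map ?f [0..<c + 2]))" by (rule sublist_concat_map) auto
  also have "sublist \<dots> (block a b (c + 2))" by simp
  finally show ?thesis .
qed

inductive_set block_chains :: "nat list \<Rightarrow> nat list \<Rightarrow> nat \<Rightarrow> nat list set"
  for a b K where
  single: "block a b K \<in> block_chains a b K"
| link: "g \<in> block_chains a b K \<Longrightarrow> i < K \<Longrightarrow>
    block a b K @ repeat c (block a b i) @ g \<in> block_chains a b K"

text \<open>Every later block is such a chain, so a word inside it that misses \<open>B\<^sub>K\<close> fits into a single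
  \<open>B\<^sub>K u B\<^sub>K\<close> with \<open>u\<close> a power of a lower block.\<close>

lemma prefix_block_chains: "g \<in> block_chains a b K \<Longrightarrow> prefix (block a b K) g"
  by (induction rule: block_chains.induct) auto

lemma block_chains_link:
  "g \<in> block_chains a b K \<Longrightarrow> h \<in> block_chains a b K \<Longrightarrow> i < K \<Longrightarrow>
    g @ repeat c (block a b i) @ h \<in> block_chains a b K"
  by (induction rule: block_chains.induct) (auto intro: block_chains.link)

lemma block_chains_append:
  "0 < K \<Longrightarrow> g \<in> block_chains a b K \<Longrightarrow> h \<in> block_chains a b K \<Longrightarrow> g @ h \<in> block_chains a b K"
  using block_chains_link[of g a b K h 0 0] by simp

lemma block_chains_repeat:
  "0 < K \<Longrightarrow> g \<in> block_chains a b K \<Longrightarrow> repeat (Suc c) g \<in> block_chains a b K"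
  by (induction c) (auto simp: repeat_Suc[of "Suc _"] repeat_Suc block_chains_append)

lemma block_chains_append_concat:
  assumes "g \<in> block_chains a b K"
    and "\<And>i h. i \<in> set xs \<Longrightarrow> h \<in> block_chains a b K \<Longrightarrow> h @ f i \<in> block_chains a b K"
  shows "g @ concat (map f xs) \<in> block_chains a b K"
  using assms
proof (induction xs arbitrary: g)
  case (Cons i xs)
  have "(g @ f i) @ concat (map f xs) \<in> block_chains a b K"
    using Cons.prems by (intro Cons.IH) auto
  then show ?case by simp
qed simp

lemma block_in_block_chains: "0 < K \<Longrightarrow> K \<le> j \<Longrightarrow> block a b j \<in> block_chains a b K"
proof (induction j rule: less_induct)
  case (less j)
  show ?case
  proof (cases "j = K")
    case False
    with less.prems obtain k where j: "j = Suc (Suc k)" and K: "K \<le> Suc k"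
      by (cases j; cases "j - 1") auto
    have base: "block a b (Suc k) \<in> block_chains a b K" using less j K by simp
    have "h @ repeat (k + 2) (block a b i) @ block a b (Suc k) \<in> block_chains a b K"
      if "i \<in> set [0..<k + 2]" "h \<in> block_chains a b K" for i h
    proof (cases "i < K")
      case True
      then show ?thesis using block_chains_link[OF that(2) base] by blast
    next
      case False
      moreover have "i < j" using that(1) j by auto
      ultimately have "block a b i \<in> block_chains a b K" using less.IH less.prems by simp
      then have "repeat (k + 2) (block a b i) \<in> block_chains a b K"
        using block_chains_repeat less.prems by (metis add_2_eq_Suc')
      then show ?thesis using block_chains_append less.prems that(2) base by (metis append.assoc)
    qed
    then have "block a b (Suc k) @ concat (map (\<lambda>i. repeat (k + 2) (block a b i) @ block a b (Suc k))
        [0..<k + 2]) \<in> block_chains a b K"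
      by (intro block_chains_append_concat[OF base])
    then show ?thesis unfolding j by (simp only: block.simps(3))
  qed (simp add: block_chains.single)
qed

lemma sublist_block_chain_avoiding:
  assumes "g \<in> block_chains a b K" "sublist w g" "\<not> sublist (block a b K) w" "0 < K"
  shows "\<exists>i<K. \<exists>c. sublist w (block a b K @ repeat c (block a b i) @ block a b K)"
  using assms
proof (induction rule: block_chains.induct)
  case single
  then have "sublist w (block a b K @ repeat 0 (block a b 0) @ block a b K)"
    by (auto intro: sublist_order.order_trans[OF _ sublist_append_rightI])
  with single show ?case by blast
next
  case (link g i c)
  let ?G = "block a b K"
  obtain r where r: "g = ?G @ r" using prefix_block_chains[OF link.hyps(1)] by (auto simp: prefix_def)
  have G: "?G \<noteq> []" using link.prems(2) by auto
  have "sublist w ((?G @ repeat c (block a b i)) @ ?G @ r)" using link.prems r by simp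
  then consider "sublist w ((?G @ repeat c (block a b i)) @ butlast ?G)" | "sublist w (tl ?G @ r)"
    using sublist_avoiding_middle link.prems(2) by blast
  then show ?case
  proof cases
    case 1
    have "?G @ repeat c (block a b i) @ ?G = ((?G @ repeat c (block a b i)) @ butlast ?G) @ [last ?G]"
      using G by simp
    then have "sublist ((?G @ repeat c (block a b i)) @ butlast ?G) (?G @ repeat c (block a b i) @ ?G)"
      by (simp only:) (rule sublist_append_rightI)
    then show ?thesis using 1 link.hyps(2) by (blast intro: sublist_order.order_trans)
  next
    case 2
    have "g = [hd ?G] @ (tl ?G @ r)" using G r by simp
    then have "sublist (tl ?G @ r) g" by (simp only:) (rule sublist_append_leftI)
    then show ?thesis using 2 link.IH link.prems by (blast intro: sublist_order.order_trans)
  qed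
qed

section \<open>The subshift generated by the blocks\<close>

definition block_language :: "nat list \<Rightarrow> nat list \<Rightarrow> nat list set" where
  "block_language a b = {w. \<exists>K. sublist w (block a b K)}"

definition block_shift :: "nat \<Rightarrow> nat list \<Rightarrow> nat list \<Rightarrow> config set" where
  "block_shift n a b = {x \<in> full_shift n. \<forall>i l. window x i l \<in> block_language a b}"

lemma block_language_upward:
  assumes "w \<in> block_language a b"
  obtains K where "K0 \<le> K" "sublist w (block a b K)"
proof -
  from assms obtain K where "sublist w (block a b K)" by (auto simp: block_language_def)
  also have "sublist (block a b K) (block a b (max K K0))" by (simp add: sublist_block)
  finally show thesis using that[of "max K K0"] by simp
qed

lemma shift_pow_block_shift: "x \<in> block_shift n a b \<Longrightarrow> shift_pow j x \<in> block_shift n a b"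
  unfolding block_shift_def full_shift_def by (auto simp: window_shift_pow shift_pow_apply)

lemma subshift_block_shift: "subshift n (block_shift n a b)"
  unfolding subshift_def closed_in_shift_def
proof (intro conjI ballI impI)
  show "block_shift n a b \<subseteq> full_shift n" by (auto simp: block_shift_def)
  show "shift ` block_shift n a b = block_shift n a b"
    by (rule shift_image_eqI) (rule shift_pow_block_shift)
next
  fix x assume x: "x \<in> full_shift n" and adh: "\<forall>e>0. \<exists>y\<in>block_shift n a b. sdist x y < e"
  have "window x i l \<in> block_language a b" for i l
  proof -
    have "(0::real) < (1/2) ^ (nat \<bar>i\<bar> + l)" by simp
    then obtain y where "y \<in> block_shift n a b" "sdist x y < (1/2) ^ (nat \<bar>i\<bar> + l)"
      using adh by blast
    then show ?thesis by (simp add: window_eq_if_sdist_less block_shift_def)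
  qed
  with x show "x \<in> block_shift n a b" by (simp add: block_shift_def)
qed

locale block_pair =
  fixes n :: nat and a b :: "nat list"
  assumes letters: "set a \<union> set b \<subseteq> {1..n}"
    and a_b_differ: "\<exists>q<length a. q < length b \<and> a ! q \<noteq> b ! q"
begin

lemma block_nonempty: "block a b K \<noteq> []"
  using a_b_differ by (intro block_ne_Nil) auto

lemma periodic_block_in_block_shift: "periodic_config (block a b K) \<in> block_shift n a b"
proof -
  have "periodic_config (block a b K) \<in> full_shift n"
    using periodic_config_in_full_shift[OF block_nonempty] set_block letters by blast
  moreover have "window (periodic_config (block a b K)) i l \<in> block_language a b" for i l
  proof -
    obtain K' where "sublist (repeat (l div length (block a b K) + 2) (block a b K)) (block a b K')"
      using sublist_repeat_block by blast
    with sublist_window_periodic_config[OF block_nonempty] show ?thesis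
      unfolding block_language_def by (blast intro: sublist_order.order_trans)
  qed
  ultimately show ?thesis by (simp add: block_shift_def)
qed

lemma finite_orbit_periodic_block: "finite (range (\<lambda>s. shift_pow s (periodic_config (block a b K))))"
  using finite_orbit_periodic_config[OF block_nonempty, where s = 0] by simp

lemma window_shift_periodic_block:
  assumes "sublist w (block a b K)"
  obtains s where "window (shift_pow s (periodic_config (block a b K))) i (length w) = w"
proof -
  have "sublist w (repeat 1 (block a b K))" using assms by (simp add: repeat_def)
  then obtain s where "w = window (periodic_config (block a b K)) s (length w)"
    using sublist_repeatE block_nonempty by blast
  then show thesis by (intro that[of "s - i"]) (simp add: window_shift_pow)
qed

lemma transitive_block_shift: "transitive_pow (block_shift n a b) 1"
  unfolding transitive_pow_def
proof (intro allI impI)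
  fix U V
  assume UV: "open_in_X (block_shift n a b) U \<and> open_in_X (block_shift n a b) V \<and> U \<noteq> {} \<and> V \<noteq> {}"
  then obtain u v where uv: "u \<in> U" "v \<in> V" by blast
  obtain r where r: "\<And>y. y \<in> block_shift n a b \<Longrightarrow> central_window y r = central_window u r \<Longrightarrow> y \<in> U"
    using open_in_X_central_window UV uv(1) by blast
  obtain r' where r': "\<And>y. y \<in> block_shift n a b \<Longrightarrow> central_window y r' = central_window v r' \<Longrightarrow> y \<in> V"
    using open_in_X_central_window UV uv(2) by blast
  have "u \<in> block_shift n a b" "v \<in> block_shift n a b" using UV uv by (auto simp: open_in_X_def)
  then have u_lang: "central_window u r \<in> block_language a b"
    and v_lang: "central_window v r' \<in> block_language a b"
    by (simp_all add: block_shift_def)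
  obtain K1 where "sublist (central_window u r) (block a b K1)"
    using block_language_upward[OF u_lang] by blast
  moreover obtain K where "K1 \<le> K" and v_K: "sublist (central_window v r') (block a b K)"
    using block_language_upward[OF v_lang] by blast
  ultimately have u_K: "sublist (central_window u r) (block a b K)"
    using sublist_block sublist_order.order_trans by blast
  let ?p = "periodic_config (block a b K)"
  obtain s where "window (shift_pow s ?p) (- int r) (length (central_window u r)) = central_window u r"
    by (rule window_shift_periodic_block[OF u_K])
  then have s: "central_window (shift_pow s ?p) r = central_window u r" by simp
  obtain s' where "window (shift_pow s' ?p) (- int r') (length (central_window v r')) = central_window v r'"
    by (rule window_shift_periodic_block[OF v_K])
  then have s': "central_window (shift_pow s' ?p) r' = central_window v r'" by simp
  have in_U: "shift_pow s ?p \<in> U" and in_V: "shift_pow s' ?p \<in> V"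
    using r s r' s' shift_pow_block_shift[OF periodic_block_in_block_shift] by blast+
  have "shift_pow s' ?p = shift_pow (1 * (s' - s)) (shift_pow s ?p)"
    by (simp add: shift_pow_add)
  then have "shift_pow s' ?p \<in> shift_pow (1 * (s' - s)) ` U \<inter> V"
    by (rule IntI[OF image_eqI[OF _ in_U] in_V])
  then show "\<exists>j. shift_pow (1 * j) ` U \<inter> V \<noteq> {}" by blast
qed

lemma periodic_points_dense:
  assumes "x \<in> block_shift n a b" "e > 0"
  shows "\<exists>p. periodic_point (block_shift n a b) p \<and> sdist x p < e"
proof -
  have "\<exists>p\<in>{p. periodic_point (block_shift n a b) p}. central_window p r = central_window x r" for r
  proof -
    have "central_window x r \<in> block_language a b" using assms(1) by (simp add: block_shift_def)
    then obtain K where "sublist (central_window x r) (block a b K)"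
      using block_language_upward by blast
    then obtain s where "window (shift_pow s (periodic_config (block a b K))) (- int r)
        (length (central_window x r)) = central_window x r"
      by (rule window_shift_periodic_block)
    moreover have "periodic_point (block_shift n a b) (shift_pow s (periodic_config (block a b K)))"
      unfolding periodic_point_def
      using shift_pow_block_shift[OF periodic_block_in_block_shift] finite_orbit_periodic_config[OF block_nonempty]
      by blast
    ultimately show ?thesis by auto
  qed
  then show ?thesis using adherent_if_central_windows assms(2) by blast
qed

lemma infinite_block_shift: "infinite (block_shift n a b)"
proof -
  obtain q where q: "q < length a" "q < length b" "a ! q \<noteq> b ! q" using a_b_differ by blast
  have "\<forall>c. \<exists>y. y \<in> block_shift n a b \<and> window y 0 (length (repeat c a @ b)) = repeat c a @ b"
  proof
    fix c
    obtain s where "window (shift_pow s (periodic_config (block a b (c + 2)))) 0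
        (length (repeat c a @ b)) = repeat c a @ b"
      by (rule window_shift_periodic_block[OF sublist_repeat_append_block])
    then show "\<exists>y. y \<in> block_shift n a b \<and> window y 0 (length (repeat c a @ b)) = repeat c a @ b"
      using shift_pow_block_shift[OF periodic_block_in_block_shift] by blast
  qed
  from choice[OF this] obtain y where
    "\<forall>c. y c \<in> block_shift n a b \<and> window (y c) 0 (length (repeat c a @ b)) = repeat c a @ b"
    by blast
  then have y: "\<And>c. y c \<in> block_shift n a b"
    "\<And>c. window (y c) 0 (length (repeat c a @ b)) = repeat c a @ b"
    by simp_all
  have y_nth: "y c (int t) = (repeat c a @ b) ! t" if "t < length (repeat c a @ b)" for c t
    using nth_window[OF that, of "y c" 0] y(2)[of c] by simp
  have distinct: "y c \<noteq> y c'" if "c < c'" for c c'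
  proof
    let ?t = "c * length a + q"
    have "(c + 1) * length a \<le> c' * length a" using that by (intro mult_right_mono) auto
    then have t: "?t < c' * length a" using q(1) by simp
    have "y c (int ?t) = b ! q" using q(2) y_nth[of ?t c] by (simp add: nth_append)
    moreover have "y c' (int ?t) = a ! q" using t q(1) y_nth[of ?t c'] by (simp add: nth_append nth_repeat)
    moreover assume "y c = y c'"
    ultimately show False using q(3) by simp
  qed
  have "inj y" by (rule linorder_inj_onI') (rule distinct)
  then have "infinite (range y)" by (rule range_inj_infinite)
  moreover have "range y \<subseteq> block_shift n a b" using y(1) by blast
  ultimately show ?thesis using finite_subset by blast
qed

lemma central_window_in_lower_power:
  assumes "0 < K" "y \<in> block_shift n a b" "\<forall>i l. \<not> sublist (block a b K) (window y i l)"
  shows "\<exists>i<K. \<exists>c. sublist (central_window y r) (repeat c (block a b i))"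
proof -
  let ?g = "length (block a b K)"
  \<comment> \<open>widening by \<open>|B\<^sub>K|\<close> on both sides lets us drop the two copies of \<open>B\<^sub>K\<close> around the power\<close>
  have "central_window y (r + ?g) \<in> block_language a b"
    using assms(2) by (simp add: block_shift_def)
  then obtain J where J: "K \<le> J" "sublist (central_window y (r + ?g)) (block a b J)"
    using block_language_upward by blast
  have "block a b J \<in> block_chains a b K" using assms(1) J(1) by (rule block_in_block_chains)
  then obtain i c where i: "i < K"
    and c: "sublist (central_window y (r + ?g)) (block a b K @ repeat c (block a b i) @ block a b K)"
    using sublist_block_chain_avoiding J(2) assms(1,3) by blast
  have len: "2 * (r + ?g) + 1 = ?g + (2 * r + 1) + ?g" by simp
  have "central_window y (r + ?g) = window y (- int (r + ?g)) (?g + (2 * r + 1) + ?g)"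
    by (rule arg_cong[OF len])
  also have "\<dots> = window y (- int (r + ?g)) ?g @ window y (- int (r + ?g) + int ?g) (2 * r + 1) @
      window y (- int (r + ?g) + int ?g + int (2 * r + 1)) ?g"
    by (rule window_append3)
  also have "\<dots> = window y (- int (r + ?g)) ?g @ central_window y r @ window y (int r + 1) ?g"
    by simp
  finally have split: "central_window y (r + ?g) =
      window y (- int (r + ?g)) ?g @ central_window y r @ window y (int r + 1) ?g" .
  have "sublist (central_window y r) (repeat c (block a b i))"
    using sublist_middle[OF c[unfolded split]] by simp
  with i show ?thesis by blast
qed

lemma periodic_if_avoids_block:
  assumes "0 < K" "y \<in> block_shift n a b" "\<forall>i l. \<not> sublist (block a b K) (window y i l)"
  shows "y \<in> (\<Union>i<K. range (\<lambda>s. shift_pow s (periodic_config (block a b i))))"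
proof (rule mem_if_central_windows_in_finite)
  show "finite (\<Union>i<K. range (\<lambda>s. shift_pow s (periodic_config (block a b i))))"
    by (simp add: finite_orbit_periodic_block)
next
  fix r
  obtain i c where "i < K" "sublist (central_window y r) (repeat c (block a b i))"
    using central_window_in_lower_power[OF assms] by blast
  moreover obtain s where "central_window y r =
      window (periodic_config (block a b i)) s (length (central_window y r))"
    using sublist_repeatE[OF block_nonempty calculation(2)] by blast
  ultimately show "\<exists>p\<in>\<Union>i<K. range (\<lambda>s. shift_pow s (periodic_config (block a b i))).
      central_window p r = central_window y r"
    by (intro bexI[of _ "shift_pow (s + int r) (periodic_config (block a b i))"])
      (auto simp: window_shift_pow)
qed

lemma block_shift_subset_if_infinite:
  assumes Y: "Y \<subseteq> block_shift n a b" "shift ` Y = Y" "infinite Y"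
    and closed: "\<forall>x\<in>block_shift n a b. (\<forall>e>0. \<exists>y\<in>Y. sdist x y < e) \<longrightarrow> x \<in> Y"
  shows "block_shift n a b \<subseteq> Y"
proof
  fix x assume x: "x \<in> block_shift n a b"
  have "\<exists>z\<in>Y. central_window z r = central_window x r" for r
  proof -
    have "central_window x r \<in> block_language a b" using x by (simp add: block_shift_def)
    then obtain K where K: "1 \<le> K" "sublist (central_window x r) (block a b K)"
      using block_language_upward by blast
    let ?E = "\<Union>i<K. range (\<lambda>s. shift_pow s (periodic_config (block a b i)))"
    have "finite ?E" by (simp add: finite_orbit_periodic_block)
    then have "\<not> Y \<subseteq> ?E" using Y(3) finite_subset by blast
    then obtain y where y: "y \<in> Y" "y \<notin> ?E" by blast
    moreover have "0 < K" "y \<in> block_shift n a b" using K(1) y(1) Y(1) by auto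
    ultimately obtain i l where "sublist (block a b K) (window y i l)"
      using periodic_if_avoids_block by blast
    with K(2) have "sublist (central_window x r) (window y i l)" by (rule sublist_order.order_trans)
    then obtain j where "central_window x r = window y j (length (central_window x r))"
      by (rule sublist_windowE)
    then have j: "central_window x r = window y j (2 * r + 1)" by simp
    have "shift_pow (j + int r) y \<in> Y" using Y(2) y(1) by (rule shift_pow_in_invariant)
    moreover have "central_window (shift_pow (j + int r) y) r = central_window x r"
      using j by (simp add: window_shift_pow)
    ultimately show ?thesis by blast
  qed
  then have "\<forall>e>0. \<exists>z\<in>Y. sdist x z < e" by (rule adherent_if_central_windows)
  then show "x \<in> Y" using closed x by blast
qed

lemma CAM_block_shift: "CAM (block_shift n a b)"
  unfolding CAM_def
proof (intro conjI allI impI ballI)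
  show "transitive_pow (block_shift n a b) 1" by (rule transitive_block_shift)
  show "faithful (block_shift n a b)"
    by (rule faithful_if_infinite[OF infinite_block_shift]) (auto simp: block_shift_def)
next
  fix x and e :: real assume "x \<in> block_shift n a b" "e > 0"
  then show "\<exists>p. periodic_point (block_shift n a b) p \<and> sdist x p < e"
    by (rule periodic_points_dense)
next
  fix Y assume "Y \<subseteq> block_shift n a b \<and> Y \<noteq> block_shift n a b \<and>
    (\<forall>x\<in>block_shift n a b. (\<forall>e>0. \<exists>y\<in>Y. sdist x y < e) \<longrightarrow> x \<in> Y) \<and> shift ` Y = Y"
  then show "finite Y" using block_shift_subset_if_infinite[of Y] by auto
qed

end

lemma block_pair_swap:
  assumes "set A \<subseteq> {1..n}" "A = ps1 @ S @ [a] @ ss1" "A = ps2 @ S @ [b] @ ss2" "a \<noteq> b"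
  shows "block_pair n A (ps1 @ S @ [b] @ ss2)"
proof
  have "set (ps1 @ S) \<subseteq> set A" unfolding assms(2) by auto
  moreover have "set ([b] @ ss2) \<subseteq> set A" unfolding assms(3) by auto
  ultimately show "set A \<union> set (ps1 @ S @ [b] @ ss2) \<subseteq> {1..n}" using assms(1) by auto
  have "A ! length (ps1 @ S) = a" "length (ps1 @ S) < length A" using assms(2) by (simp_all add: nth_append)
  then show "\<exists>q<length A. q < length (ps1 @ S @ [b] @ ss2) \<and> A ! q \<noteq> (ps1 @ S @ [b] @ ss2) ! q"
    using assms(4) by (intro exI[of _ "length (ps1 @ S)"]) simp
qed

section \<open>Languages of subshifts\<close>

definition language :: "config set \<Rightarrow> nat list set" where
  "language Y = {window x i l | x i l. x \<in> Y}"

definition locally_admissible :: "config set \<Rightarrow> nat \<Rightarrow> nat list \<Rightarrow> bool" where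
  "locally_admissible Y N w \<longleftrightarrow> (\<forall>v. sublist v w \<and> length v = N \<longrightarrow> v \<in> language Y)"

definition cylinder :: "config set \<Rightarrow> int \<Rightarrow> nat list \<Rightarrow> config set" where
  "cylinder Y p u = {x \<in> Y. window x p (length u) = u}"

lemma window_in_language: "x \<in> Y \<Longrightarrow> window x i l \<in> language Y"
  unfolding language_def by blast

lemma language_sublist: "sublist u v \<Longrightarrow> v \<in> language Y \<Longrightarrow> u \<in> language Y"
  unfolding language_def by (blast elim: sublist_windowE)

lemma set_language: "Y \<subseteq> full_shift n \<Longrightarrow> w \<in> language Y \<Longrightarrow> set w \<subseteq> {1..n}"
  unfolding language_def using set_window by blast

lemma locally_admissible_if_language: "w \<in> language Y \<Longrightarrow> locally_admissible Y N w"
  unfolding locally_admissible_def using language_sublist by blast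

lemma locally_admissible_sublist:
  "sublist v w \<Longrightarrow> locally_admissible Y N w \<Longrightarrow> locally_admissible Y N v"
  unfolding locally_admissible_def by (blast intro: sublist_order.order_trans)

lemma locally_admissible_glue:
  assumes "length S = M" "locally_admissible Y (Suc M) (U @ S)" "locally_admissible Y (Suc M) (S @ V)"
  shows "locally_admissible Y (Suc M) (U @ S @ V)"
  unfolding locally_admissible_def
proof (intro allI impI)
  fix v assume v: "sublist v (U @ S @ V) \<and> length v = Suc M"
  then obtain p where p: "p + length v \<le> length (U @ S @ V)"
    "\<forall>t<length v. v ! t = (U @ S @ V) ! (p + t)"
    unfolding sublist_iff_nth by blast
  show "v \<in> language Y"
  proof (cases "length U \<le> p")
    case True
    then have "sublist v (S @ V)" using p by (intro sublist_of_right_part[where U = U]) auto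
    then show ?thesis using assms(3) v unfolding locally_admissible_def by blast
  next
    case False
    then have "sublist v (U @ S)"
      using p v assms(1) by (intro sublist_of_left_part[where V = V]) auto
    then show ?thesis using assms(2) v unfolding locally_admissible_def by blast
  qed
qed

lemma finite_language_length:
  assumes "Y \<subseteq> full_shift n"
  shows "finite {v \<in> language Y. length v = N}"
proof -
  have "{v \<in> language Y. length v = N} \<subseteq> {xs. set xs \<subseteq> {1..n} \<and> length xs = N}"
    using assms set_window unfolding language_def by blast
  then show ?thesis using finite_lists_length_eq[of "{1..n}" N] finite_subset by blast
qed

lemma open_cylinder: "open_in_X Y (cylinder Y p u)"
  unfolding open_in_X_def
proof (intro conjI ballI)
  show "cylinder Y p u \<subseteq> Y" unfolding cylinder_def by blast
  fix x assume x: "x \<in> cylinder Y p u"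
  show "\<exists>e>0. \<forall>y\<in>Y. sdist x y < e \<longrightarrow> y \<in> cylinder Y p u"
  proof (intro exI[of _ "(1/2) ^ (nat \<bar>p\<bar> + length u)"] conjI ballI impI)
    fix y assume "y \<in> Y" "sdist x y < (1/2) ^ (nat \<bar>p\<bar> + length u)"
    then show "y \<in> cylinder Y p u"
      using x window_eq_if_sdist_less unfolding cylinder_def by fastforce
  qed simp
qed

lemma cylinder_nonempty:
  assumes "shift ` Y = Y" "u \<in> language Y"
  shows "cylinder Y p u \<noteq> {}"
proof -
  from assms(2) obtain x i where x: "x \<in> Y" "u = window x i (length u)"
    unfolding language_def by auto
  then have "shift_pow (i - p) x \<in> cylinder Y p u"
    using shift_pow_in_invariant[OF assms(1)] unfolding cylinder_def by (simp add: window_shift_pow)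
  then show ?thesis by blast
qed

definition right_deterministic :: "config set \<Rightarrow> nat \<Rightarrow> bool" where
  "right_deterministic Y M \<longleftrightarrow>
     (\<forall>S a b. length S = M \<longrightarrow> S @ [a] \<in> language Y \<longrightarrow> S @ [b] \<in> language Y \<longrightarrow> a = b)"

lemma right_deterministic_next:
  assumes "right_deterministic Y M" "x \<in> Y" "window x t M = window x t' M"
  shows "x (t + int M) = x (t' + int M)"
proof -
  have w: "window x t (M + 1) = window x t M @ [x (t + int M)]"
    "window x t' (M + 1) = window x t' M @ [x (t' + int M)]"
    by (simp_all only: window_append) (simp_all add: window_def)
  have "window x t M @ [x (t + int M)] \<in> language Y"
    using window_in_language[OF assms(2), of t "M + 1"] w(1) by simp
  moreover have "window x t M @ [x (t' + int M)] \<in> language Y"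
    using window_in_language[OF assms(2), of t' "M + 1"] w(2) assms(3) by simp
  moreover have "length (window x t M) = M" by simp
  ultimately show ?thesis using assms(1) unfolding right_deterministic_def by blast
qed

lemma right_deterministic_propagate:
  assumes "right_deterministic Y M" "x \<in> Y" "window x t M = window x t' M"
  shows "x (t + int k + int M) = x (t' + int k + int M)"
proof -
  have "window x (t + int k) M = window x (t' + int k) M"
  proof (induction k)
    case (Suc k)
    have "window x (t + int k) (M + 1) = window x (t' + int k) (M + 1)"
      using Suc right_deterministic_next[OF assms(1,2) Suc]
      by (simp only: window_append) (simp add: window_def)
    then have "drop 1 (window x (t + int k) (M + 1)) = drop 1 (window x (t' + int k) (M + 1))"
      by simp
    then show ?case by (simp add: drop_window add_ac)
  qed (use assms(3) in simp)
  then show ?thesis by (rule right_deterministic_next[OF assms(1,2)])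
qed

lemma periodic_from:
  assumes "\<And>u. st \<le> u \<Longrightarrow> x (u + int p) = x u" "st \<le> v"
  shows "x (v + int p * int m) = x v"
proof (induction m)
  case (Suc m)
  have "0 \<le> int p * int m" by simp
  then have "st \<le> v + int p * int m" using assms(2) by linarith
  then have "x (v + int p * int m + int p) = x (v + int p * int m)" by (rule assms(1))
  then show ?case using Suc by (simp add: algebra_simps)
qed simp

text \<open>Pigeonhole on the \<open>Q + 1\<close> windows of length \<open>M\<close> before \<open>v\<close> gives an eventual period
  \<open>p \<le> Q\<close>, and \<open>p\<close> divides \<open>Q!\<close>.\<close>

lemma right_deterministic_period:
  assumes "right_deterministic Y M" "Y \<subseteq> full_shift n" "x \<in> Y"
  shows "x (v + int (fact (card {w \<in> language Y. length w = M}))) = x v"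
proof -
  define Q where "Q = card {w \<in> language Y. length w = M}"
  let ?t = "v - int Q - int M"
  have "\<not> inj_on (\<lambda>c. window x (?t + int c) M) {0..Q}"
  proof
    assume "inj_on (\<lambda>c. window x (?t + int c) M) {0..Q}"
    moreover have "(\<lambda>c. window x (?t + int c) M) ` {0..Q} \<subseteq> {w \<in> language Y. length w = M}"
      using window_in_language[OF assms(3)] by auto
    ultimately have "card {0..Q} \<le> Q"
      using finite_language_length[OF assms(2)] unfolding Q_def by (rule card_inj_on_le)
    then show False by simp
  qed
  then obtain c c' where "c \<noteq> c'" "c \<le> Q" "c' \<le> Q"
    "window x (?t + int c) M = window x (?t + int c') M"
    unfolding inj_on_def by auto
  then obtain c1 c2 where c: "c1 < c2" "c2 \<le> Q"
    "window x (?t + int c1) M = window x (?t + int c2) M"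
    by (cases "c < c'") (auto intro: that[of c c'] that[of c' c])
  let ?p = "c2 - c1"
  have per: "x (u + int ?p) = x u" if "?t + int c1 + int M \<le> u" for u
  proof -
    let ?k = "nat (u - (?t + int c1 + int M))"
    have "x (?t + int c1 + int ?k + int M) = x (?t + int c2 + int ?k + int M)"
      by (rule right_deterministic_propagate[OF assms(1,3) c(3)])
    moreover have "?t + int c1 + int ?k + int M = u" "?t + int c2 + int ?k + int M = u + int ?p"
      using that c(1) by auto
    ultimately show ?thesis by metis
  qed
  have "?p dvd fact Q" using c by (intro dvd_fact) auto
  then obtain m where m: "fact Q = ?p * m" by (rule dvdE)
  have "?t + int c1 + int M \<le> v" using c by simp
  with per have "x (v + int ?p * int m) = x v" by (rule periodic_from)
  then show ?thesis unfolding Q_def[symmetric] m by simp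
qed

lemma finite_if_right_deterministic:
  assumes "right_deterministic Y M" "Y \<subseteq> full_shift n"
  shows "finite Y"
proof -
  let ?P = "int (fact (card {w \<in> language Y. length w = M}))"
  have "Y \<subseteq> {x \<in> full_shift n. shift_pow ?P x = x}"
    using assms right_deterministic_period by (auto simp: shift_pow_def)
  moreover have "finite {x \<in> full_shift n. shift_pow ?P x = x}"
    by (rule finite_fixed_configs) simp
  ultimately show ?thesis by (rule finite_subset)
qed

lemma constant_if_window_shift_eq:
  assumes "window x 0 L = T" "window x 1 L = T"
  shows "set T \<subseteq> {x 0}"
proof -
  have "t < L \<longrightarrow> x (int t) = x 0" for t
  proof (induction t)
    case (Suc t)
    show ?case
    proof
      assume t: "Suc t < L"
      then have "x (1 + int t) = x (0 + int t)" using assms by (metis Suc_lessD nth_window)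
      then show "x (int (Suc t)) = x 0" using Suc t by (simp add: add.commute)
    qed
  qed simp
  then show ?thesis using assms(1) by (auto simp: in_set_conv_nth)
qed

lemma loop_word_from_return:
  assumes "x \<in> Y" "window x 0 (length T) = T" "window x d (length T) = T" "int (length T) \<le> d"
  obtains A where "prefix T A" "A @ T \<in> language Y"
proof
  let ?A = "window x 0 (nat d)"
  have "window x 0 (nat d + length T) = ?A @ T"
    using window_append[of x 0 "nat d" "length T"] assms(3,4) by simp
  then show "?A @ T \<in> language Y" using window_in_language[OF assms(1)] by metis
  have "T = take (length T) ?A" using assms(2,4) by (simp add: take_window)
  then show "prefix T ?A" by (metis take_is_prefix)
qed

section \<open>Approximation of an infinite totally transitive subshift\<close>

locale infinite_tt_subshift =
  fixes n :: nat and W :: "config set"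
  assumes subshift: "subshift n W" and infinite: "infinite W" and tt: "totally_transitive W"
begin

lemma W_full_shift: "W \<subseteq> full_shift n"
  using subshift unfolding subshift_def closed_in_shift_def by blast

lemma shift_W: "shift ` W = W"
  using subshift unfolding subshift_def by blast

lemma return_to_cylinders:
  assumes "1 \<le> k" "u \<in> language W" "v \<in> language W"
  obtains x j where "x \<in> W" "window x p (length u) = u" "window x (q + int k * j) (length v) = v"
proof -
  have "open_in_X W (cylinder W p u) \<and> open_in_X W (cylinder W q v) \<and>
      cylinder W p u \<noteq> {} \<and> cylinder W q v \<noteq> {}"
    using open_cylinder cylinder_nonempty[OF shift_W] assms(2,3) by blast
  then obtain j where "shift_pow (int k * j) ` cylinder W p u \<inter> cylinder W q v \<noteq> {}"
    using tt assms(1) unfolding totally_transitive_def transitive_pow_def by blast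
  then obtain x where "x \<in> cylinder W p u" "shift_pow (int k * j) x \<in> cylinder W q v" by blast
  then show thesis
    by (intro that[of x j]) (auto simp: cylinder_def window_shift_pow add.commute)
qed

lemma language_merge:
  assumes "u \<in> language W" "v \<in> language W"
  obtains m where "m \<in> language W" "sublist u m" "sublist v m"
proof -
  obtain x j where x: "x \<in> W" "window x 0 (length u) = u" "window x j (length v) = v"
    using return_to_cylinders[of 1 u v 0 0] assms by auto
  let ?i = "min 0 j" and ?l = "nat (max (int (length u)) (j + int (length v)) - min 0 j)"
  have "sublist (window x 0 (length u)) (window x ?i ?l)"
    "sublist (window x j (length v)) (window x ?i ?l)"
    by (intro sublist_window; linarith)+
  then show thesis using that x window_in_language by metis
qed

lemma language_cover:
  assumes "finite S" "S \<subseteq> language W"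
  shows "\<exists>T\<in>language W. \<forall>f\<in>S. sublist f T"
  using assms
proof (induction S rule: finite_induct)
  case empty
  obtain x where "x \<in> W" using infinite by fastforce
  then show ?case using window_in_language by blast
next
  case (insert f S)
  then obtain T where T: "T \<in> language W" "\<forall>g\<in>S. sublist g T" by blast
  obtain m where "m \<in> language W" "sublist f m" "sublist T m"
    using language_merge[of f T] insert.prems T(1) by blast
  then show ?case using T(2) by (blast intro: sublist_order.order_trans)
qed

lemma branching:
  obtains S a b where "a \<noteq> b" "length S = M" "S @ [a] \<in> language W" "S @ [b] \<in> language W"
proof -
  have "\<not> right_deterministic W M"
    using finite_if_right_deterministic[OF _ W_full_shift] infinite by blast
  then show thesis using that unfolding right_deterministic_def by blast
qed

lemma loop_word_exists:
  assumes "T \<in> language W" "a \<in> set T" "b \<in> set T" "a \<noteq> b"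
  obtains A where "prefix T A" "A @ T \<in> language W"
proof -
  let ?k = "length T + 2"
  \<comment> \<open>a return time \<open>1 + k j\<close> is nonzero unless \<open>T\<close> is constant, and then it exceeds \<open>|T|\<close>\<close>
  obtain x j where x: "x \<in> W" "window x 0 (length T) = T" "window x (1 + int ?k * j) (length T) = T"
    using return_to_cylinders[of ?k T T 0 1] assms(1) by auto
  let ?d = "1 + int ?k * j"
  have "j \<noteq> 0"
  proof
    assume "j = 0"
    then have "set T \<subseteq> {x 0}" using x(2,3) by (intro constant_if_window_shift_eq) simp_all
    with assms(2-4) show False by blast
  qed
  then consider "0 < j" | "j < 0" by linarith
  then show thesis
  proof cases
    case 1
    then have "int ?k \<le> int ?k * j" by simp
    then have "int (length T) \<le> ?d" by linarith
    with x show thesis using loop_word_from_return that by blast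
  next
    case 2
    then have "int ?k * 1 \<le> int ?k * - j" by (intro mult_left_mono) auto
    then have "int ?k \<le> - (int ?k * j)" by simp
    then have "int (length T) \<le> - ?d" by linarith
    moreover have "window (shift_pow ?d x) 0 (length T) = T" "window (shift_pow ?d x) (- ?d) (length T) = T"
      using x(2,3) by (simp_all add: window_shift_pow)
    moreover have "shift_pow ?d x \<in> W" using shift_pow_in_invariant[OF shift_W x(1)] .
    ultimately show thesis using loop_word_from_return that by blast
  qed
qed

text \<open>Consecutive loops overlap in \<open>J\<close>, so concatenations of loops are loops
  (\<open>locally_admissible_glue\<close>).\<close>

definition admissible_loop :: "nat list \<Rightarrow> nat list \<Rightarrow> bool" where
  "admissible_loop J w \<longleftrightarrow> prefix J w \<and> locally_admissible W (Suc (length J)) (w @ J)"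

lemma admissible_loop_append:
  assumes "admissible_loop J u" "admissible_loop J v"
  shows "admissible_loop J (u @ v)"
proof -
  obtain v' where v': "v = J @ v'" using assms(2) by (auto simp: admissible_loop_def prefix_def)
  have "locally_admissible W (Suc (length J)) (u @ J)"
    "locally_admissible W (Suc (length J)) (J @ (v' @ J))"
    using assms v' by (auto simp: admissible_loop_def)
  then have "locally_admissible W (Suc (length J)) (u @ J @ (v' @ J))"
    by (rule locally_admissible_glue[OF refl])
  then show ?thesis using assms(1) v' by (auto simp: admissible_loop_def)
qed

lemma admissible_loop_repeat: "admissible_loop J u \<Longrightarrow> admissible_loop J (repeat (Suc c) u)"
  by (induction c) (auto simp: repeat_Suc[of "Suc _"] repeat_Suc admissible_loop_append)

lemma admissible_loop_append_concat:
  assumes "admissible_loop J g" "\<And>i. i \<in> set xs \<Longrightarrow> admissible_loop J (f i)"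
  shows "admissible_loop J (g @ concat (map f xs))"
  using assms
proof (induction xs arbitrary: g)
  case (Cons i xs)
  have "admissible_loop J ((g @ f i) @ concat (map f xs))"
    using Cons.prems by (intro Cons.IH admissible_loop_append) auto
  then show ?case by simp
qed simp

lemma admissible_loop_block:
  assumes "admissible_loop J a" "admissible_loop J b"
  shows "admissible_loop J (block a b K)"
  using assms
proof (induction a b K rule: block.induct)
  case (3 a b k)
  have "admissible_loop J (repeat (k + 2) (block a b i) @ block a b (Suc k))"
    if "i \<in> set [0..<k + 2]" for i
    using admissible_loop_append[OF admissible_loop_repeat[OF 3(2)[OF that 3(4,5)]] 3(1)[OF 3(4,5)]]
    by simp
  then show ?case unfolding block.simps(3) by (intro admissible_loop_append_concat 3(1)[OF 3(4,5)])
qed (auto intro: admissible_loop_append)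

lemma admissible_loop_swap:
  assumes "admissible_loop J A" "length S = length J"
    and "A = ps1 @ S @ [a] @ ss1" "A = ps2 @ S @ [b] @ ss2"
  shows "admissible_loop J (ps1 @ S @ [b] @ ss2)"
proof -
  have "A = (ps1 @ S) @ ([a] @ ss1)" using assms(3) by simp
  then have "prefix (ps1 @ S) A" by (rule prefixI)
  moreover have "prefix J A" using assms(1) by (simp add: admissible_loop_def)
  moreover have "length J \<le> length (ps1 @ S)" using assms(2) by simp
  ultimately have "prefix J (ps1 @ S)" by (metis prefix_length_prefix)
  then have "prefix J (ps1 @ S @ [b] @ ss2)" using prefix_prefix[of J "ps1 @ S" "[b] @ ss2"] by simp
  have adm: "locally_admissible W (Suc (length J)) (A @ J)"
    using assms(1) by (simp add: admissible_loop_def)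
  have "A @ J = (ps1 @ S) @ ([a] @ ss1 @ J)" using assms(3) by simp
  then have "sublist (ps1 @ S) (A @ J)" by (simp only:) (rule sublist_append_rightI)
  then have "locally_admissible W (Suc (length J)) (ps1 @ S)"
    using adm by (rule locally_admissible_sublist)
  moreover have "A @ J = ps2 @ (S @ [b] @ ss2 @ J)" using assms(4) by simp
  then have "sublist (S @ [b] @ ss2 @ J) (A @ J)" by (simp only:) (rule sublist_append_leftI)
  then have "locally_admissible W (Suc (length J)) (S @ ([b] @ ss2 @ J))"
    using adm by (rule locally_admissible_sublist)
  ultimately have "locally_admissible W (Suc (length J)) (ps1 @ S @ ([b] @ ss2 @ J))"
    by (rule locally_admissible_glue[OF assms(2)])
  with \<open>prefix J (ps1 @ S @ [b] @ ss2)\<close> show ?thesis by (simp add: admissible_loop_def)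
qed

lemma admissible_loop_exists:
  assumes "T \<in> language W" "a \<in> set T" "b \<in> set T" "a \<noteq> b" "M < length T"
  obtains A where "admissible_loop (take M T) A" "sublist T A" "A \<in> language W"
proof -
  obtain A where A: "prefix T A" "A @ T \<in> language W"
    using loop_word_exists[OF assms(1-4)] by blast
  have "prefix (take M T) A" using A(1) take_is_prefix prefix_order.order_trans by blast
  moreover have "sublist (A @ take M T) ((A @ take M T) @ drop M T)" by (rule sublist_append_rightI)
  then have "sublist (A @ take M T) (A @ T)" by simp
  then have "locally_admissible W (Suc M) (A @ take M T)"
    by (rule locally_admissible_sublist[OF _ locally_admissible_if_language[OF A(2)]])
  ultimately have "admissible_loop (take M T) A"
    unfolding admissible_loop_def using assms(5) by simp
  moreover have "A \<in> language W" using A(2) by (rule language_sublist[OF sublist_append_rightI])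
  ultimately show thesis using that A(1) by simp
qed

lemma admissible_block_pair:
  obtains a b where "block_pair n a b" "\<And>K. locally_admissible W (Suc M) (block a b K)"
    "\<And>f. f \<in> language W \<Longrightarrow> length f = Suc M \<Longrightarrow> sublist f a"
proof -
  obtain S a b where ab: "a \<noteq> b" "length S = M" "S @ [a] \<in> language W" "S @ [b] \<in> language W"
    by (rule branching)
  obtain T where T: "T \<in> language W" "\<forall>f\<in>{f \<in> language W. length f = Suc M}. sublist f T"
    using language_cover[OF finite_language_length[OF W_full_shift]] by blast
  have Sa: "sublist (S @ [a]) T" and Sb: "sublist (S @ [b]) T" using T(2) ab by auto
  have "a \<in> set T" "b \<in> set T" using set_mono_sublist[OF Sa] set_mono_sublist[OF Sb] by auto
  moreover have "M < length T" using sublist_length_le[OF Sa] ab(2) by simp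
  ultimately obtain A where A: "admissible_loop (take M T) A" "sublist T A" "A \<in> language W"
    using admissible_loop_exists[OF T(1) _ _ ab(1)] by blast
  then have lJ: "length (take M T) = M" using \<open>M < length T\<close> by simp
  obtain ps1 ss1 where A1: "A = ps1 @ S @ [a] @ ss1"
    using sublist_order.order_trans[OF Sa A(2)] unfolding sublist_def by auto
  obtain ps2 ss2 where A2: "A = ps2 @ S @ [b] @ ss2"
    using sublist_order.order_trans[OF Sb A(2)] unfolding sublist_def by auto
  let ?C = "ps1 @ S @ [b] @ ss2"
  have "block_pair n A ?C"
    using set_language[OF W_full_shift A(3)] A1 A2 ab(1) by (rule block_pair_swap)
  moreover have "locally_admissible W (Suc M) (block A ?C K)" for K
  proof -
    have "admissible_loop (take M T) ?C" using admissible_loop_swap[OF A(1) _ A1 A2] lJ ab(2) by simp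
    then have "admissible_loop (take M T) (block A ?C K)" by (rule admissible_loop_block[OF A(1)])
    then have "locally_admissible W (Suc M) (block A ?C K @ take M T)"
      unfolding admissible_loop_def using lJ by simp
    then show ?thesis by (rule locally_admissible_sublist[OF sublist_append_rightI])
  qed
  moreover have "sublist f A" if "f \<in> language W" "length f = Suc M" for f
    using T(2) A(2) that by (blast intro: sublist_order.order_trans)
  ultimately show thesis by (rule that)
qed

lemma block_shift_near_W:
  assumes "\<And>K. locally_admissible W (Suc (2 * m)) (block a b K)" "x \<in> block_shift n a b"
  shows "\<exists>w\<in>W. sdist x w \<le> (1/2) ^ m"
proof -
  have "central_window x m \<in> block_language a b" using assms(2) by (simp add: block_shift_def)
  then obtain K where "sublist (central_window x m) (block a b K)"
    by (auto simp: block_language_def)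
  then have "central_window x m \<in> language W"
    using assms(1)[of K] unfolding locally_admissible_def by simp
  then obtain w i l where w: "w \<in> W" "central_window x m = window w i l"
    unfolding language_def by blast
  moreover have "l = 2 * m + 1" using arg_cong[OF w(2), of length] by simp
  ultimately have "central_window x m = central_window (shift_pow (i + int m) w) m"
    by (simp add: window_shift_pow)
  then have "sdist x (shift_pow (i + int m) w) < (1/2) ^ m"
    by (rule sdist_less_if_central_window_eq)
  moreover have "shift_pow (i + int m) w \<in> W" using shift_pow_in_invariant[OF shift_W w(1)] .
  ultimately show ?thesis by force
qed

lemma W_near_block_shift:
  assumes "block_pair n a b" "\<And>f. f \<in> language W \<Longrightarrow> length f = Suc (2 * m) \<Longrightarrow> sublist f a"
    and "w \<in> W"
  shows "\<exists>x\<in>block_shift n a b. sdist x w \<le> (1/2) ^ m"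
proof -
  interpret block_pair n a b by (rule assms(1))
  have "sublist (central_window w m) (block a b 0)"
    using assms(2) window_in_language[OF assms(3)] by simp
  then obtain s where "window (shift_pow s (periodic_config (block a b 0))) (- int m)
      (length (central_window w m)) = central_window w m"
    by (rule window_shift_periodic_block)
  then have "sdist (shift_pow s (periodic_config (block a b 0))) w < (1/2) ^ m"
    by (intro sdist_less_if_central_window_eq) simp
  moreover have "shift_pow s (periodic_config (block a b 0)) \<in> block_shift n a b"
    by (rule shift_pow_block_shift[OF periodic_block_in_block_shift])
  ultimately show ?thesis by force
qed

lemma approximating_block_pairs:
  obtains a b where "\<And>m. block_pair n (a m) (b m)"
    "\<And>m. hausdorff (block_shift n (a m) (b m)) W \<le> (1/2) ^ m"
proof -
  have "\<exists>a b. block_pair n a b \<and> hausdorff (block_shift n a b) W \<le> (1/2) ^ m" for m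
  proof -
    obtain a b where ab: "block_pair n a b" "\<And>K. locally_admissible W (Suc (2 * m)) (block a b K)"
      "\<And>f. f \<in> language W \<Longrightarrow> length f = Suc (2 * m) \<Longrightarrow> sublist f a"
      using admissible_block_pair[where M = "2 * m"] by blast
    have "block_shift n a b \<noteq> {}" "W \<noteq> {}"
      using block_pair.infinite_block_shift[OF ab(1)] infinite by (auto dest: infinite_imp_nonempty)
    then have "hausdorff (block_shift n a b) W \<le> (1/2) ^ m"
      using block_shift_near_W[OF ab(2)] W_near_block_shift[OF ab(1,3)] by (rule hausdorff_le)
    with ab(1) show ?thesis by blast
  qed
  then show thesis using that by metis
qed

end

theorem theorem2p10:
  fixes n :: nat and W :: "config set"
  assumes "n \<ge> 2" and "subshift n W" and "infinite W" and "totally_transitive W"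
  shows "\<exists>X :: nat \<Rightarrow> config set.
           (\<forall>m. subshift n (X m) \<and> CAM (X m)) \<and>
           (\<lambda>m. hausdorff (X m) W) \<longlonglongrightarrow> 0"
proof -
  interpret infinite_tt_subshift n W using assms(2-4) by unfold_locales
  obtain a b where ab: "\<And>m. block_pair n (a m) (b m)"
    "\<And>m. hausdorff (block_shift n (a m) (b m)) W \<le> (1/2) ^ m"
    using approximating_block_pairs by blast
  let ?X = "\<lambda>m. block_shift n (a m) (b m)"
  have "subshift n (?X m) \<and> CAM (?X m)" for m
    using subshift_block_shift block_pair.CAM_block_shift[OF ab(1)] by blast
  moreover have "(\<lambda>m. hausdorff (?X m) W) \<longlonglongrightarrow> 0"
  proof (rule hausdorff_tendsto_zero[OF _ _ ab(2)])
    show "?X m \<noteq> {}" for m using block_pair.infinite_block_shift[OF ab(1)] by (rule infinite_imp_nonempty)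
    show "W \<noteq> {}" using infinite by (rule infinite_imp_nonempty)
  qed
  ultimately show ?thesis by (intro exI[of _ ?X]) blast
qed

end
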